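(* Consider the miners' game with $n$ miners $s_1,\dots,s_n$, parameters $R>0$, $N>0$, unit prices $\lambda_1,\dots,\lambda_n>0$, where miner $s_i$ chooses $\mu_i\ge0$ and receives profit $P_i=\frac{\mu_i}{\sum_{j=1}^n\mu_j}RN-\lambda_i\mu_i$ (the fraction being $0$ if $\sum_j\mu_j=0$). Let $q$ be the number of miners with a nonzero strategy in a Nash equilibrium of this game. Then $q\ge 2$.
   Context: A Nash equilibrium is a profile $(\mu_1^*,\dots,\mu_n^* )$ with all $\mu_i^*\ge 0$ such that no miner $s_i$ can strictly increase $P_i$ by unilaterally changing $\mu_i^*$ to another value $\mu_i\ge0$. *)

theory Defs
  imports Complex_Main
begin

text \<open>Miners are indexed by 1..n; a strategy profile is mu :: nat => real
  (values outside 1..n are irrelevant). Profit of miner i.\<close>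
definition miner_profit ::
  "nat \<Rightarrow> real \<Rightarrow> real \<Rightarrow> (nat \<Rightarrow> real) \<Rightarrow> (nat \<Rightarrow> real) \<Rightarrow> nat \<Rightarrow> real" where
  "miner_profit n R N lam mu i =
     (if (\<Sum>j=1..n. mu j) = 0 then 0 else mu i / (\<Sum>j=1..n. mu j) * R * N) - lam i * mu i"

definition miners_nash_eq ::
  "nat \<Rightarrow> real \<Rightarrow> real \<Rightarrow> (nat \<Rightarrow> real) \<Rightarrow> (nat \<Rightarrow> real) \<Rightarrow> bool" where
  "miners_nash_eq n R N lam mu \<longleftrightarrow>
     (\<forall>i\<in>{1..n}. mu i \<ge> 0) \<and>
     (\<forall>i\<in>{1..n}. \<forall>m::real. m \<ge> 0 \<longrightarrow>
        \<not> (miner_profit n R N lam (mu(i := m)) i > miner_profit n R N lam mu i))"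

end

theory Submission
  imports Defs
begin

text \<open>If at most one miner were active, that miner would face the profit
  \<open>R N - \<lambda> m\<close> for every stake \<open>m > 0\<close> and \<open>0\<close> for \<open>m = 0\<close>: this has supremum \<open>R N\<close>
  but no maximiser, so halving a positive stake, or entering with a small one,
  is a profitable deviation.\<close>

lemma sum_fun_upd_single:
  fixes f :: "'a \<Rightarrow> 'b::comm_monoid_add"
  assumes "finite A" and "k \<in> A" and "\<forall>j\<in>A - {k}. f j = 0"
  shows "sum (f(k := m)) A = m"
proof -
  have "sum (f(k := m)) A = (\<Sum>j\<in>A. if j = k then m else 0)"
    using assms(3) by (intro sum.cong) auto
  also have "\<dots> = m"
    using assms(1,2) by simp
  finally show ?thesis .
qed

lemma miner_profit_lone_miner:
  assumes "k \<in> {1..n}" and "\<forall>j\<in>{1..n} - {k}. mu j = 0"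
  shows "miner_profit n R N lam (mu(k := m)) k = (if m = 0 then 0 else R * N - lam k * m)"
  using sum_fun_upd_single[of "{1..n}" k mu m] assms by (simp add: miner_profit_def)

lemma lone_miner_not_nash_eq:
  assumes "R > 0" and "N > 0" and "lam k > 0"
    and "k \<in> {1..n}" and "\<forall>j\<in>{1..n} - {k}. mu j = 0"
  shows "\<not> miners_nash_eq n R N lam mu"
proof
  assume nash: "miners_nash_eq n R N lam mu"
  define profit where "profit m = miner_profit n R N lam (mu(k := m)) k" for m
  have profit_eq: "profit m = (if m = 0 then 0 else R * N - lam k * m)" for m
    unfolding profit_def using miner_profit_lone_miner[OF assms(4,5)] .
  have no_gain: "\<not> profit m > profit (mu k)" if "m \<ge> 0" for m
    using nash assms(4) that unfolding miners_nash_eq_def profit_def by simp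
  have "mu k \<ge> 0"
    using nash assms(4) unfolding miners_nash_eq_def by simp
  have "R * N > 0"
    using assms(1,2) by simp
  show False
  proof (cases "mu k = 0")
    case True
    have "profit (R * N / (2 * lam k)) = R * N / 2"
      using \<open>R * N > 0\<close> assms(3) by (simp add: profit_eq field_simps)
    then have "profit (R * N / (2 * lam k)) > profit (mu k)"
      using True \<open>R * N > 0\<close> by (simp add: profit_eq)
    with no_gain show False
      using \<open>R * N > 0\<close> assms(3) by simp
  next
    case False
    then have "profit (mu k / 2) > profit (mu k)"
      using \<open>mu k \<ge> 0\<close> assms(3) by (simp add: profit_eq)
    with no_gain show False
      using \<open>mu k \<ge> 0\<close> by simp
  qed
qed

theorem corollary2:
  fixes n :: nat and R N :: real and lam mu :: "nat \<Rightarrow> real"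
  assumes "n \<ge> 1" and "R > 0" and "N > 0"
    and "\<forall>i\<in>{1..n}. lam i > 0"
    and "miners_nash_eq n R N lam mu"
  shows "card {i\<in>{1..n}. mu i \<noteq> 0} \<ge> 2"
proof (rule ccontr)
  let ?active = "{i\<in>{1..n}. mu i \<noteq> 0}"
  assume "\<not> card ?active \<ge> 2"
  then have "card ?active \<le> Suc 0"
    by simp
  then obtain k where "k \<in> {1..n}" and "?active \<subseteq> {k}"
    using assms(1) by (cases "?active = {}") (auto simp: card_le_Suc0_iff_eq)
  then have "\<forall>j\<in>{1..n} - {k}. mu j = 0"
    by blast
  with lone_miner_not_nash_eq assms(2-5) \<open>k \<in> {1..n}\<close> show False
    by blast
qed

end
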